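(* For every $\beta\in[0,1)$ and every $G\in\mathscr S$, there exists a sequence of functions $G_N:\widehat\Lambda_N/N\to\mathbb R$, $N\in\mathbb N$, with $G_N(0)=G_N(1)=0$ for all $N$, such that $$\sup_{x\in\widehat\Lambda_N}|G_N(\tfrac xN)-G(\tfrac xN)|\to0\quad\text{and}\quad\sup_{x\in\widehat\Lambda_N}|\mathcal A^NG_N(\tfrac xN)-\alpha G''(\tfrac xN)|\to0\quad(N\to\infty).$$
   Context: Fix $\alpha,\alpha_L,\alpha_R>0$, $\beta\in[0,1)$, $\Lambda_N=\{1,\dots,N-1\}$, $\widehat\Lambda_N=\{0,\dots,N\}$. $A^N$ is the generator of a random walk on $\widehat\Lambda_N$ absorbed at $\{0,N\}$: for $f:\widehat\Lambda_N\to\mathbb R$, $A^Nf(x)=\mathbf 1_{\{x\in\Lambda_N\}}N^2\sum_{y\in\Lambda_N,|y-x|=1}\alpha(f(y)-f(x))+\mathbf 1_{\{x=1\}}N^{2-\beta}\alpha_L(f(0)-f(1))+\mathbf 1_{\{x=N-1\}}N^{2-\beta}\alpha_R(f(N)-f(N-1))$ (so $A^Nf(0)=A^Nf(N)=0$). For $F:\widehat\Lambda_N/N\to\mathbb R$ set $\mathcal A^NF(\tfrac xN):=A^N[F(\tfrac\cdot N)](x)$. $\mathscr S$ is the Dirichlet test function space: with $\mathcal L$ the nonnegative self-adjoint operator $F\mapsto-\alpha F''$ on $L^2([0,1])$ with domain $\{F\in\mathcal W^{1,2}_0:F''\in L^2\}$, eigenvalues $\lambda_n$ and orthonormal eigenbasis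 $\psi_n$, $\mathscr S=\{F\in L^2:\sum_n(1+\lambda_n)^k\langle F,\psi_n\rangle^2<\infty\ \forall k\in\mathbb Z\}$; its elements are $\mathcal C^\infty([0,1])$ functions (derivatives extend continuously to $[0,1]$). *)

theory Defs
  imports "HOL-Analysis.Analysis"
begin

text \<open>Dirichlet eigenbasis of F \<mapsto> -alpha F'' on L^2([0,1]) (n \<ge> 1):
  psi_n(x) = sqrt 2 sin(n pi x), lambda_n = alpha (n pi)^2.
  Index shift: n = Suc k.\<close>

definition dir_psi :: "nat \<Rightarrow> real \<Rightarrow> real" where
  "dir_psi n x = sqrt 2 * sin (real n * pi * x)"

definition dir_lambda :: "real \<Rightarrow> nat \<Rightarrow> real" where
  "dir_lambda \<alpha> n = \<alpha> * (real n * pi)^2"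

text \<open>Elements of S are identified with their
  smooth representative on [0,1]; we require G continuous on [0,1] to pin down that
  representative (values off [0,1] are irrelevant).\<close>

definition in_S :: "real \<Rightarrow> (real \<Rightarrow> real) \<Rightarrow> bool" where
  "in_S \<alpha> G \<longleftrightarrow> continuous_on {0..1} G \<and>
     (\<forall>k::int. summable (\<lambda>m. (1 + dir_lambda \<alpha> (Suc m)) powi k *
        (integral {0..1} (\<lambda>x. G x * dir_psi (Suc m) x))^2))"

text \<open>Derivatives on [0,1] (one-sided at the endpoints), i.e. the continuous
  extensions to [0,1] of the derivatives.\<close>

definition d01 :: "(real \<Rightarrow> real) \<Rightarrow> real \<Rightarrow> real" where
  "d01 F x = vector_derivative F (at x within {0..1})"

definition d2_01 :: "(real \<Rightarrow> real) \<Rightarrow> real \<Rightarrow> real" where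
  "d2_01 F x = d01 (d01 F) x"

text \<open>The rescaled generator: cA N F (x/N) = A^N [F(./N)](x), x \<in> {0..N}.\<close>

definition genA :: "real \<Rightarrow> real \<Rightarrow> real \<Rightarrow> real \<Rightarrow> nat \<Rightarrow> (real \<Rightarrow> real) \<Rightarrow> nat \<Rightarrow> real" where
  "genA \<alpha> \<alpha>L \<alpha>R \<beta> N F x =
     (if 1 \<le> x \<and> x \<le> N - 1 then
        (real N)^2 * (\<Sum>y\<in>{y. 1 \<le> y \<and> y \<le> N - 1 \<and> (y = x + 1 \<or> x = y + 1)}.
            \<alpha> * (F (real y / real N) - F (real x / real N)))
        + (if x = 1 then real N powr (2 - \<beta>) * \<alpha>L * (F 0 - F (1 / real N)) else 0)
        + (if x = N - 1 then real N powr (2 - \<beta>) * \<alpha>R *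
              (F 1 - F (real (N - 1) / real N)) else 0)
      else 0)"

end

(*
  Every G in the test space is the sum of its Fourier sine series
  \<Sum> b_m sin ((m + 1) pi x), the coefficients decaying so fast that
  \<Sum> |b_m| ((m + 1) pi)^4 converges; the series may be differentiated twice
  termwise, and completeness of the sine system identifies it with G on [0, 1].
  Hence G and G'' vanish at 0 and 1, G is O(t) at distance t from the endpoints,
  and the second differences of G with step h equal h^2 G'' + O(h^4).

  In the bulk, A^N is alpha N^2 times the discrete Laplacian, so A^N G is close
  to alpha G''. At the sites 1 and N - 1 the boundary rates alpha_L N^(2 - beta)
  and alpha_R N^(2 - beta) replace the bulk rate alpha N^2. Adding to G an affine
  function, chosen so that the boundary terms reproduce the missing bulk terms (a
  discrete Robin condition), and setting the result to 0 at the endpoints gives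
  G_N with A^N G_N = alpha N^2 times the second difference of G at the sites
  1, ..., N - 1.
  Since G(1/N) = O(1/N), the affine correction is O(N^(beta - 1) + 1/N), which
  tends to 0 because beta < 1.
*)

theory Submission
  imports Defs
begin

section \<open>Sine series with rapidly decaying coefficients\<close>

lemma abs_sin_sub_le_cube: "\<bar>sin y - y\<bar> \<le> \<bar>y\<bar> ^ 3 / 6" for y :: real
proof -
  have "\<bar>sin y - (\<Sum>m<3. sin_coeff m * y ^ m)\<bar> \<le> inverse (fact 3) * \<bar>y\<bar> ^ 3"
    by (rule Maclaurin_sin_bound)
  then show ?thesis
    by (simp add: sin_coeff_def eval_nat_numeral lessThan_Suc)
qed

lemma abs_two_cos_taylor_le: "\<bar>2 * cos t - 2 + t\<^sup>2\<bar> \<le> t ^ 4 / 12" for t :: real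
proof -
  define y where "y = t / 2"
  have t: "t = 2 * y" by (simp add: y_def)
  have "2 * cos t - 2 + t\<^sup>2 = 4 * ((y - sin y) * (y + sin y))"
    unfolding t cos_double_sin by (simp add: power2_eq_square algebra_simps)
  also have "\<bar>\<dots>\<bar> \<le> 4 * ((\<bar>y\<bar> ^ 3 / 6) * (2 * \<bar>y\<bar>))"
    unfolding abs_mult
  proof (intro mult_left_mono mult_mono)
    show "\<bar>y - sin y\<bar> \<le> \<bar>y\<bar> ^ 3 / 6"
      using abs_sin_sub_le_cube[of y] by (simp add: abs_minus_commute)
    show "\<bar>y + sin y\<bar> \<le> 2 * \<bar>y\<bar>"
      using abs_sin_x_le_abs_x[of y] by linarith
  qed auto
  also have "\<dots> = t ^ 4 / 12"
    unfolding t by (simp add: power_mult_distrib abs_mult eval_nat_numeral power_abs[symmetric])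
  finally show ?thesis .
qed

lemma abs_sin_second_difference_le:
  "\<bar>sin (w * (x + h)) + sin (w * (x - h)) - 2 * sin (w * x) + h\<^sup>2 * w\<^sup>2 * sin (w * x)\<bar>
     \<le> w ^ 4 * h ^ 4 / 12" for w x h :: real
proof -
  have "sin (w * (x + h)) + sin (w * (x - h)) - 2 * sin (w * x) + h\<^sup>2 * w\<^sup>2 * sin (w * x) =
      sin (w * x) * (2 * cos (w * h) - 2 + (w * h)\<^sup>2)"
    by (simp add: distrib_left right_diff_distrib sin_add sin_diff power_mult_distrib algebra_simps)
  also have "\<bar>\<dots>\<bar> \<le> 1 * ((w * h) ^ 4 / 12)"
    unfolding abs_mult by (intro mult_mono abs_two_cos_taylor_le) auto
  finally show ?thesis by (simp add: power_mult_distrib)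
qed

lemma abs_suminf_le:
  fixes f g :: "nat \<Rightarrow> real"
  shows "(\<And>m. \<bar>f m\<bar> \<le> g m) \<Longrightarrow> summable g \<Longrightarrow> \<bar>suminf f\<bar> \<le> suminf g"
  using norm_suminf_le[of f g] by simp

definition freq :: "nat \<Rightarrow> real" where
  "freq m = real (Suc m) * pi"

definition sine_series :: "(nat \<Rightarrow> real) \<Rightarrow> real \<Rightarrow> real" where
  "sine_series b x = (\<Sum>m. b m * sin (freq m * x))"

definition sine_series' :: "(nat \<Rightarrow> real) \<Rightarrow> real \<Rightarrow> real" where
  "sine_series' b x = (\<Sum>m. b m * freq m * cos (freq m * x))"

definition sine_series'' :: "(nat \<Rightarrow> real) \<Rightarrow> real \<Rightarrow> real" where
  "sine_series'' b x = (\<Sum>m. - (b m * freq m ^ 2 * sin (freq m * x)))"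

lemma freq_ge_Suc: "freq m \<ge> real (Suc m)"
  using pi_gt3 by (simp add: freq_def)

lemma freq_ge_1: "freq m \<ge> 1"
  using freq_ge_Suc[of m] by linarith

lemma freq_pow_le: "j \<le> 4 \<Longrightarrow> freq m ^ j \<le> freq m ^ 4"
  using freq_ge_1 by (intro power_increasing) auto

lemma sin_freq: "sin (freq m) = 0"
  unfolding freq_def by (rule sin_npi)

lemma sine_series_0 [simp]: "sine_series b 0 = 0"
  and sine_series_1 [simp]: "sine_series b 1 = 0"
  and sine_series''_0 [simp]: "sine_series'' b 0 = 0"
  and sine_series''_1 [simp]: "sine_series'' b 1 = 0"
  by (simp_all add: sine_series_def sine_series''_def sin_freq)

lemma abs_term_le_freq_pow:
  assumes "j \<le> 4" "\<bar>t\<bar> \<le> 1"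
  shows "\<bar>b m * freq m ^ j * t\<bar> \<le> \<bar>b m\<bar> * freq m ^ 4"
proof -
  have "\<bar>b m * freq m ^ j * t\<bar> = \<bar>b m\<bar> * freq m ^ j * \<bar>t\<bar>"
    using freq_ge_1[of m] by (simp add: abs_mult)
  also have "\<dots> \<le> \<bar>b m\<bar> * freq m ^ 4 * 1"
    using assms freq_pow_le[of j m] freq_ge_1[of m]
    by (intro mult_mono mult_left_mono) auto
  finally show ?thesis by simp
qed

lemma sine_orthogonal:
  "((\<lambda>x. sin (freq i * x) * sin (freq n * x)) has_integral (if i = n then 1/2 else 0)) {0..1}"
proof -
  have cos_int: "((\<lambda>x. cos (of_int j * pi * x)) has_integral (if j = 0 then 1 else 0)) {0..1}"
    for j :: int
  proof (cases "j = 0")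
    case False
    then have "((\<lambda>x. cos (of_int j * pi * x)) has_integral
        (sin (of_int j * pi * 1) / (of_int j * pi) - sin (of_int j * pi * 0) / (of_int j * pi))) {0..1}"
      by (intro fundamental_theorem_of_calculus)
        (auto intro!: derivative_eq_intros simp: has_real_derivative_iff_has_vector_derivative[symmetric])
    moreover have "sin (of_int j * pi) = 0"
      by (simp add: sin_zero_iff_int2)
    ultimately show ?thesis using False by simp
  qed (simp add: has_integral_const_real[of 1 0 1, simplified])
  have "sin (freq i * x) * sin (freq n * x) =
     cos (of_int (int i - int n) * pi * x) / 2 - cos (of_int (int i + int n + 2) * pi * x) / 2" for x
    by (simp add: sin_times_sin freq_def algebra_simps diff_divide_distrib)
  moreover have "((\<lambda>x. cos (of_int (int i - int n) * pi * x) / 2 - cos (of_int (int i + int n + 2) * pi * x) / 2)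
     has_integral ((if int i - int n = 0 then 1 else 0) / 2 - (if int i + int n + 2 = 0 then 1 else 0) / 2)) {0..1}"
    by (intro has_integral_diff has_integral_divide cos_int)
  ultimately show ?thesis by (simp split: if_splits)
qed

context
  fixes b :: "nat \<Rightarrow> real"
  assumes decay: "summable (\<lambda>m. \<bar>b m\<bar> * freq m ^ 4)"
begin

lemma summable_by_decay:
  assumes "j \<le> 4" "\<And>m. \<bar>t m\<bar> \<le> 1"
  shows "summable (\<lambda>m. b m * freq m ^ j * t m)"
  by (rule summable_comparison_test'[OF decay]) (use abs_term_le_freq_pow assms in auto)

lemma summable_sine_terms:
  "summable (\<lambda>m. b m * sin (freq m * x))"
  "summable (\<lambda>m. b m * freq m * cos (freq m * x))"
  "summable (\<lambda>m. - (b m * freq m ^ 2 * sin (freq m * x)))"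
  using summable_by_decay[of 0 "\<lambda>m. sin (freq m * x)"]
    summable_by_decay[of 1 "\<lambda>m. cos (freq m * x)"]
    summable_minus[OF summable_by_decay[of 2 "\<lambda>m. sin (freq m * x)"]]
  by simp_all

lemma uniformly_convergent_by_decay:
  assumes "j \<le> 4" "\<And>m x. \<bar>t m x\<bar> \<le> 1"
  shows "uniformly_convergent_on UNIV (\<lambda>n x. \<Sum>m<n. b m * freq m ^ j * t m x)"
  by (rule Weierstrass_m_test'[OF _ decay]) (use abs_term_le_freq_pow assms in auto)

lemma has_field_derivative_sine_series:
  "(sine_series b has_field_derivative sine_series' b x) (at x)"
proof -
  have "((\<lambda>x. \<Sum>m. b m * sin (freq m * x)) has_field_derivative
          (\<Sum>m. b m * freq m * cos (freq m * x))) (at x)"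
  proof (rule has_field_derivative_series'(2)[where S = UNIV])
    show "uniformly_convergent_on UNIV (\<lambda>n x. \<Sum>m<n. b m * freq m * cos (freq m * x))"
      using uniformly_convergent_by_decay[of 1 "\<lambda>m x. cos (freq m * x)"] by simp
  qed (auto intro!: derivative_eq_intros summable_sine_terms)
  then show ?thesis
    unfolding sine_series_def[abs_def] sine_series'_def .
qed

lemma has_field_derivative_sine_series':
  "(sine_series' b has_field_derivative sine_series'' b x) (at x)"
proof -
  have "((\<lambda>x. \<Sum>m. b m * freq m * cos (freq m * x)) has_field_derivative
          (\<Sum>m. - (b m * freq m ^ 2 * sin (freq m * x)))) (at x)"
  proof (rule has_field_derivative_series'(2)[where S = UNIV])
    show "uniformly_convergent_on UNIV
            (\<lambda>n x. \<Sum>m<n. - (b m * freq m ^ 2 * sin (freq m * x)))"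
      using uniformly_convergent_by_decay[of 2 "\<lambda>m x. - sin (freq m * x)"] by simp
  qed (auto intro!: derivative_eq_intros summable_sine_terms simp: power2_eq_square)
  then show ?thesis
    unfolding sine_series'_def[abs_def] sine_series''_def .
qed

lemma sine_series_second_difference:
  "\<bar>sine_series b (x + h) + sine_series b (x - h) - 2 * sine_series b x - h\<^sup>2 * sine_series'' b x\<bar>
     \<le> h ^ 4 / 12 * (\<Sum>m. \<bar>b m\<bar> * freq m ^ 4)"
proof -
  define D where "D m = sin (freq m * (x + h)) + sin (freq m * (x - h)) - 2 * sin (freq m * x)
    + h\<^sup>2 * (freq m)\<^sup>2 * sin (freq m * x)" for m
  have "(\<lambda>m. b m * sin (freq m * (x + h)) + b m * sin (freq m * (x - h)) - 2 * (b m * sin (freq m * x))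
          - h\<^sup>2 * (- (b m * freq m ^ 2 * sin (freq m * x))))
      sums (sine_series b (x + h) + sine_series b (x - h) - 2 * sine_series b x - h\<^sup>2 * sine_series'' b x)"
    unfolding sine_series_def sine_series''_def
    by (intro sums_add sums_diff sums_mult summable_sums summable_sine_terms)
  moreover have "(\<lambda>m. b m * sin (freq m * (x + h)) + b m * sin (freq m * (x - h)) - 2 * (b m * sin (freq m * x))
          - h\<^sup>2 * (- (b m * freq m ^ 2 * sin (freq m * x)))) = (\<lambda>m. b m * D m)"
    by (simp add: D_def fun_eq_iff algebra_simps)
  ultimately have "sine_series b (x + h) + sine_series b (x - h) - 2 * sine_series b x - h\<^sup>2 * sine_series'' b x
      = (\<Sum>m. b m * D m)"
    by (simp add: sums_iff)
  also have "\<bar>\<dots>\<bar> \<le> (\<Sum>m. h ^ 4 / 12 * (\<bar>b m\<bar> * freq m ^ 4))"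
  proof (rule abs_suminf_le[OF _ summable_mult[OF decay]])
    fix m
    have "\<bar>b m\<bar> * \<bar>D m\<bar> \<le> \<bar>b m\<bar> * (freq m ^ 4 * h ^ 4 / 12)"
      unfolding D_def by (intro mult_left_mono abs_sin_second_difference_le) simp
    then show "\<bar>b m * D m\<bar> \<le> h ^ 4 / 12 * (\<bar>b m\<bar> * freq m ^ 4)"
      by (simp only: abs_mult) (simp add: algebra_simps)
  qed
  also have "\<dots> = h ^ 4 / 12 * (\<Sum>m. \<bar>b m\<bar> * freq m ^ 4)"
    by (rule suminf_mult[OF decay])
  finally show ?thesis .
qed

lemma abs_sine_series_le:
  "\<bar>sine_series b t\<bar> \<le> \<bar>t\<bar> * (\<Sum>m. \<bar>b m\<bar> * freq m ^ 4)"
  "\<bar>sine_series b (1 - t)\<bar> \<le> \<bar>t\<bar> * (\<Sum>m. \<bar>b m\<bar> * freq m ^ 4)"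
proof -
  have near_0: "\<bar>b m * sin (freq m * t)\<bar> \<le> \<bar>t\<bar> * (\<bar>b m\<bar> * freq m ^ 4)" for m
  proof -
    have "\<bar>sin (freq m * t)\<bar> \<le> freq m * \<bar>t\<bar>"
      using abs_sin_x_le_abs_x[of "freq m * t"] freq_ge_1[of m] by (simp add: abs_mult)
    also have "\<dots> \<le> freq m ^ 4 * \<bar>t\<bar>"
      using freq_pow_le[of 1 m] by (intro mult_right_mono) auto
    finally have "\<bar>b m\<bar> * \<bar>sin (freq m * t)\<bar> \<le> \<bar>b m\<bar> * (freq m ^ 4 * \<bar>t\<bar>)"
      by (rule mult_left_mono) simp
    then show ?thesis
      by (simp only: abs_mult mult_ac)
  qed
  have near_1: "\<bar>b m * sin (freq m * (1 - t))\<bar> \<le> \<bar>t\<bar> * (\<bar>b m\<bar> * freq m ^ 4)" for m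
  proof -
    have "sin (freq m * (1 - t)) = - cos (freq m) * sin (freq m * t)"
      by (simp add: right_diff_distrib sin_diff sin_freq)
    then have "\<bar>b m * sin (freq m * (1 - t))\<bar> = \<bar>cos (freq m)\<bar> * \<bar>b m * sin (freq m * t)\<bar>"
      by (simp only: abs_mult abs_minus mult_ac)
    also have "\<dots> \<le> 1 * \<bar>b m * sin (freq m * t)\<bar>"
      by (intro mult_right_mono) auto
    finally show ?thesis using near_0[of m] by simp
  qed
  have sum_eq: "(\<Sum>m. \<bar>t\<bar> * (\<bar>b m\<bar> * freq m ^ 4)) = \<bar>t\<bar> * (\<Sum>m. \<bar>b m\<bar> * freq m ^ 4)"
    by (rule suminf_mult[OF decay])
  show "\<bar>sine_series b t\<bar> \<le> \<bar>t\<bar> * (\<Sum>m. \<bar>b m\<bar> * freq m ^ 4)"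
    unfolding sine_series_def sum_eq[symmetric]
    by (rule abs_suminf_le[OF near_0 summable_mult[OF decay]])
  show "\<bar>sine_series b (1 - t)\<bar> \<le> \<bar>t\<bar> * (\<Sum>m. \<bar>b m\<bar> * freq m ^ 4)"
    unfolding sine_series_def sum_eq[symmetric]
    by (rule abs_suminf_le[OF near_1 summable_mult[OF decay]])
qed

lemma sine_series_fourier_coeff:
  "((\<lambda>x. sine_series b x * sin (freq n * x)) has_integral (b n / 2)) {0..1}"
proof -
  let ?f = "\<lambda>k x. \<Sum>i<k. b i * sin (freq i * x) * sin (freq n * x)"
  have lim: "uniform_limit {0..1} ?f (\<lambda>x. \<Sum>i. b i * sin (freq i * x) * sin (freq n * x)) sequentially"
  proof (rule Weierstrass_m_test[OF _ decay])
    fix i x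
    show "norm (b i * sin (freq i * x) * sin (freq n * x)) \<le> \<bar>b i\<bar> * freq i ^ 4"
      using abs_term_le_freq_pow[of 0 "sin (freq i * x) * sin (freq n * x)" b i]
      by (simp add: abs_mult mult_le_one)
  qed
  have "continuous_on {0..1} (?f k)" for k
    by (intro continuous_intros)
  then obtain I J where I: "\<And>k. (?f k has_integral I k) {0..1}"
    and J: "((\<lambda>x. \<Sum>i. b i * sin (freq i * x) * sin (freq n * x)) has_integral J) {0..1}"
    and IJ: "I \<longlonglongrightarrow> J"
    using uniform_limit_integral[OF lim] by auto
  have Ik: "I k = b n / 2" if "n < k" for k
  proof -
    have "(?f k has_integral (\<Sum>i<k. b i * (if i = n then 1/2 else 0))) {0..1}"
      unfolding mult.assoc by (intro has_integral_sum has_integral_mult_right sine_orthogonal) auto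
    also have "(\<Sum>i<k. b i * (if i = n then 1/2 else 0)) = (\<Sum>i<k. if i = n then b n / 2 else 0)"
      by (intro sum.cong) auto
    also have "\<dots> = b n / 2"
      using that by (subst sum.delta) auto
    finally show ?thesis
      using has_integral_unique[OF I[of k]] by simp
  qed
  have "I \<longlonglongrightarrow> b n / 2"
    using eventually_gt_at_top[of n] by (rule tendsto_eventually[OF eventually_mono]) (rule Ik)
  then have "J = b n / 2"
    using LIMSEQ_unique[OF IJ] by simp
  with J have "((\<lambda>x. \<Sum>i. b i * sin (freq i * x) * sin (freq n * x)) has_integral b n / 2) {0..1}"
    by simp
  moreover have "(\<Sum>i. b i * sin (freq i * x) * sin (freq n * x)) = sine_series b x * sin (freq n * x)" for x
    unfolding sine_series_def using summable_sine_terms(1) by (simp add: suminf_mult2)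
  ultimately show ?thesis by simp
qed

lemma continuous_on_sine_series: "continuous_on A (sine_series b)"
  using has_field_derivative_sine_series
  by (meson DERIV_isCont continuous_at_imp_continuous_on)

end

section \<open>Completeness of the sine system\<close>

lemma orthogonal_sin_mult_cos_pow:
  assumes orth: "\<And>k. ((\<lambda>x. h x * sin (real k * pi * x)) has_integral 0) {0..1::real}"
  shows "((\<lambda>x. h x * sin (real k * pi * x) * cos (pi * x) ^ j) has_integral 0) {0..1}"
proof (induction j arbitrary: k)
  case 0
  show ?case using orth[of k] by simp
next
  case (Suc j)
  show ?case
  proof (cases k)
    case 0
    then show ?thesis by simp
  next
    case (Suc m)
    have sin_cos: "sin (real k * pi * x) * cos (pi * x) =
        (sin (real (Suc (Suc m)) * pi * x) + sin (real m * pi * x)) / 2" for x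
      unfolding sin_times_cos Suc by (simp add: algebra_simps)
    have "h x * sin (real k * pi * x) * cos (pi * x) ^ Suc j =
       1/2 * (h x * sin (real (Suc (Suc m)) * pi * x) * cos (pi * x) ^ j) +
       1/2 * (h x * sin (real m * pi * x) * cos (pi * x) ^ j)" for x
    proof -
      have "h x * sin (real k * pi * x) * cos (pi * x) ^ Suc j =
          h x * cos (pi * x) ^ j * (sin (real k * pi * x) * cos (pi * x))"
        by (simp add: algebra_simps)
      also have "\<dots> = h x * cos (pi * x) ^ j *
          ((sin (real (Suc (Suc m)) * pi * x) + sin (real m * pi * x)) / 2)"
        by (simp only: sin_cos)
      finally show ?thesis by (simp add: algebra_simps)
    qed
    moreover have "((\<lambda>x. 1/2 * (h x * sin (real (Suc (Suc m)) * pi * x) * cos (pi * x) ^ j) +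
        1/2 * (h x * sin (real m * pi * x) * cos (pi * x) ^ j)) has_integral (1/2 * 0 + 1/2 * 0)) {0..1}"
      by (intro has_integral_add has_integral_mult_right Suc.IH)
    ultimately show ?thesis by simp
  qed
qed

lemma orthogonal_sin_mult_polynomial_cos:
  assumes orth: "\<And>k. ((\<lambda>x. h x * sin (real k * pi * x)) has_integral 0) {0..1::real}"
    and g: "real_polynomial_function g"
  shows "((\<lambda>x. h x * sin (pi * x) * g (cos (pi * x))) has_integral 0) {0..1}"
proof -
  obtain a d where g_eq: "g = (\<lambda>t. \<Sum>i\<le>d. a i * t ^ i)"
    using g real_polynomial_function_iff_sum by blast
  have "((\<lambda>x. \<Sum>i\<le>d. a i * (h x * sin (real 1 * pi * x) * cos (pi * x) ^ i)) has_integral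
      (\<Sum>i\<le>d. a i * 0)) {0..1}"
    by (intro has_integral_sum has_integral_mult_right orthogonal_sin_mult_cos_pow orth) auto
  then show ?thesis
    unfolding g_eq by (simp add: sum_distrib_left algebra_simps)
qed

text \<open>Substituting \<open>t = cos (pi * x)\<close>, Stone--Weierstrass approximates \<open>h\<close> uniformly by
  polynomials in \<open>cos (pi * x)\<close>, against which \<open>h * sin (pi * x)\<close> is orthogonal.\<close>

lemma has_integral_square_mult_sin_0:
  assumes hc: "continuous_on {0..1} h"
    and orth: "\<And>k. ((\<lambda>x. h x * sin (real k * pi * x)) has_integral 0) {0..1::real}"
  shows "((\<lambda>x. h x ^ 2 * sin (pi * x)) has_integral 0) {0..1}"
proof -
  have "(\<lambda>x. h x ^ 2 * sin (pi * x)) integrable_on {0..1}"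
    by (intro integrable_continuous_interval continuous_intros hc)
  then obtain I where I: "((\<lambda>x. h x ^ 2 * sin (pi * x)) has_integral I) {0..1}"
    by blast
  have "bounded (h ` {0..1})"
    by (intro compact_imp_bounded compact_continuous_image hc) auto
  then obtain M where M: "M > 0" "\<And>x. x \<in> {0..1} \<Longrightarrow> \<bar>h x\<bar> \<le> M"
    unfolding bounded_pos by auto
  have "continuous_on {-1..1} (\<lambda>t. h (arccos t / pi))"
  proof (rule continuous_on_compose2[OF hc])
    show "continuous_on {-1..1} (\<lambda>t. arccos t / pi)"
      by (intro continuous_intros continuous_on_arccos') auto
    show "(\<lambda>t. arccos t / pi) ` {-1..1} \<subseteq> {0..1}"
      using arccos_lbound arccos_ubound by (auto simp: field_simps)
  qed
  have bound: "\<bar>I\<bar> \<le> M * e" if e: "e > 0" for e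
  proof -
    obtain g where g: "real_polynomial_function g"
      and close: "\<And>t. t \<in> {-1..1} \<Longrightarrow> \<bar>h (arccos t / pi) - g t\<bar> < e"
      using Stone_Weierstrass_real_polynomial_function[OF compact_Icc \<open>continuous_on {-1..1} _\<close> e]
      by auto
    have close_x: "\<bar>h x - g (cos (pi * x))\<bar> < e" if "x \<in> {0..1}" for x
      using close[of "cos (pi * x)"] that by (simp add: arccos_cos)
    have diff: "((\<lambda>x. h x ^ 2 * sin (pi * x) - h x * sin (pi * x) * g (cos (pi * x)))
        has_integral (I - 0)) {0..1}"
      by (intro has_integral_diff I orthogonal_sin_mult_polynomial_cos orth g)
    have "norm (I - 0) \<le> (M * e) * Henstock_Kurzweil_Integration.content {0..1::real}"
    proof (rule has_integral_bound_real[OF _ _ diff, where S = "{}"])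
      fix x :: real assume "x \<in> {0..1} - {}"
      then have x: "x \<in> {0..1}" by simp
      have "\<bar>h x\<bar> * \<bar>sin (pi * x)\<bar> * \<bar>h x - g (cos (pi * x))\<bar> \<le> M * 1 * e"
        using M(2)[OF x] close_x[OF x] M(1) by (intro mult_mono) auto
      then show "norm (h x ^ 2 * sin (pi * x) - h x * sin (pi * x) * g (cos (pi * x))) \<le> M * e"
        by (simp add: abs_mult[symmetric] power2_eq_square algebra_simps)
    qed (use M e in auto)
    then show ?thesis by simp
  qed
  have "\<bar>I\<bar> \<le> 0 + e" if "e > 0" for e
    using bound[of "e / M"] that M by simp
  then have "\<bar>I\<bar> \<le> 0"
    by (rule field_le_epsilon)
  with I show ?thesis by simp
qed

lemma sine_system_complete:
  assumes hc: "continuous_on {0..1} h"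
    and orth: "\<And>n. ((\<lambda>x. h x * sin (freq n * x)) has_integral 0) {0..1}"
    and x: "x \<in> {0..1}"
  shows "h x = 0"
proof -
  have "((\<lambda>x. h x * sin (real k * pi * x)) has_integral 0) {0..1}" for k
    using orth[of "k - 1"] by (cases k) (simp_all add: freq_def)
  then have int0: "((\<lambda>x. h x ^ 2 * sin (pi * x)) has_integral 0) {0..1}"
    by (rule has_integral_square_mult_sin_0[OF hc])
  have sq_sin_0: "h y ^ 2 * sin (pi * y) = 0" if "y \<in> {0..1}" for y
  proof (rule has_integral_0_cbox_imp_0[of 0 1 "\<lambda>x. h x ^ 2 * sin (pi * x)"])
    show "continuous_on (cbox 0 1) (\<lambda>x. h x ^ 2 * sin (pi * x))"
      using hc by (auto intro!: continuous_intros)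
    show "0 \<le> h x ^ 2 * sin (pi * x)" if "x \<in> box 0 1" for x
      using that by (auto intro!: mult_nonneg_nonneg sin_ge_zero)
  qed (use int0 that in auto)
  have interior_0: "h y = 0" if "y \<in> {0<..<1}" for y
  proof -
    have "sin (pi * y) > 0"
      using that by (intro sin_gt_zero) auto
    then show ?thesis
      using sq_sin_0[of y] that by simp
  qed
  show ?thesis
    by (rule continuous_constant_on_closure[of "{0<..<1}" h]) (use hc interior_0 x in auto)
qed

section \<open>Elements of the test space\<close>

definition sine_coeff :: "(real \<Rightarrow> real) \<Rightarrow> nat \<Rightarrow> real" where
  "sine_coeff G m = 2 * integral {0..1} (\<lambda>x. G x * sin (freq m * x))"

lemma integral_mult_dir_psi:
  "integral {0..1} (\<lambda>x. G x * dir_psi (Suc m) x) = sine_coeff G m / sqrt 2"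
proof -
  have "integral {0..1} (\<lambda>x. G x * dir_psi (Suc m) x)
      = integral {0..1} (\<lambda>x. sqrt 2 * (G x * sin (freq m * x)))"
    by (simp add: dir_psi_def freq_def algebra_simps)
  also have "\<dots> = (2 / sqrt 2) * integral {0..1} (\<lambda>x. G x * sin (freq m * x))"
    by (simp add: real_div_sqrt)
  finally show ?thesis
    by (simp add: sine_coeff_def)
qed

lemma abs_mult_pow4_le:
  fixes b w \<alpha> :: real
  assumes w: "0 < w" and \<alpha>: "0 < \<alpha>"
  shows "\<bar>b\<bar> * w ^ 4 \<le> b\<^sup>2 * (1 + \<alpha> * w\<^sup>2) ^ 5 / \<alpha> ^ 5 + inverse (w\<^sup>2)"
proof -
  have "2 * (\<bar>b\<bar> * w ^ 5) * (1 / w) \<le> (\<bar>b\<bar> * w ^ 5)\<^sup>2 + (1 / w)\<^sup>2"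
    by (rule sum_squares_bound)
  moreover have "2 * (\<bar>b\<bar> * w ^ 5) * (1 / w) = 2 * (\<bar>b\<bar> * w ^ 4)"
    using w by (simp add: eval_nat_numeral)
  moreover have "(\<bar>b\<bar> * w ^ 5)\<^sup>2 \<le> b\<^sup>2 * (1 + \<alpha> * w\<^sup>2) ^ 5 / \<alpha> ^ 5"
  proof -
    have "(\<alpha> * w\<^sup>2) ^ 5 \<le> (1 + \<alpha> * w\<^sup>2) ^ 5"
      using \<alpha> by (intro power_mono) auto
    then have "b\<^sup>2 * (\<alpha> * w\<^sup>2) ^ 5 \<le> b\<^sup>2 * (1 + \<alpha> * w\<^sup>2) ^ 5"
      by (rule mult_left_mono) simp
    moreover have "b\<^sup>2 * (\<alpha> * w\<^sup>2) ^ 5 = \<alpha> ^ 5 * (\<bar>b\<bar> * w ^ 5)\<^sup>2"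
      by (simp add: power_mult_distrib power_mult[symmetric])
    ultimately show ?thesis
      using \<alpha> by (simp add: field_simps)
  qed
  moreover have "(1 / w)\<^sup>2 = inverse (w\<^sup>2)"
    by (simp add: power_one_over inverse_eq_divide)
  moreover have "0 \<le> b\<^sup>2 * (1 + \<alpha> * w\<^sup>2) ^ 5 / \<alpha> ^ 5" "0 \<le> inverse (w\<^sup>2)"
    using \<alpha> by simp_all
  ultimately show ?thesis
    by linarith
qed

lemma in_S_sine_coeff_decay:
  assumes \<alpha>: "\<alpha> > 0" and "in_S \<alpha> G"
  shows "summable (\<lambda>m. \<bar>sine_coeff G m\<bar> * freq m ^ 4)"
proof -
  have "summable (\<lambda>m. (1 + dir_lambda \<alpha> (Suc m)) powi 5 * (sine_coeff G m / sqrt 2)\<^sup>2)"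
    using assms(2) unfolding in_S_def integral_mult_dir_psi by blast
  then have "summable (\<lambda>m. 2 / \<alpha> ^ 5 * ((1 + dir_lambda \<alpha> (Suc m)) powi 5 * (sine_coeff G m / sqrt 2)\<^sup>2))"
    by (rule summable_mult)
  then have coeff: "summable (\<lambda>m. (sine_coeff G m)\<^sup>2 * (1 + \<alpha> * (freq m)\<^sup>2) ^ 5 / \<alpha> ^ 5)"
    by (simp add: dir_lambda_def freq_def power_int_def power_divide mult_ac)
  have "summable (\<lambda>m. inverse (real (Suc m) ^ 2))"
    using inverse_power_summable[of 2] summable_Suc_iff[of "\<lambda>n. inverse (real n ^ 2)"] by simp
  then have freq: "summable (\<lambda>m. inverse ((freq m)\<^sup>2))"
    by (rule summable_comparison_test'[where N = 0])
      (use freq_ge_Suc in \<open>auto intro!: le_imp_inverse_le power_mono\<close>)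
  show ?thesis
    using abs_mult_pow4_le[OF _ \<alpha>] freq_ge_1
    by (intro summable_comparison_test'[OF summable_add[OF coeff freq]])
      (simp add: abs_mult less_le_trans[OF zero_less_one])
qed

lemma in_S_eq_sine_series:
  assumes "\<alpha> > 0" and S: "in_S \<alpha> G" and x: "x \<in> {0..1}"
  shows "G x = sine_series (sine_coeff G) x"
proof -
  have decay: "summable (\<lambda>m. \<bar>sine_coeff G m\<bar> * freq m ^ 4)"
    using in_S_sine_coeff_decay[OF assms(1,2)] .
  have G_cont: "continuous_on {0..1} G"
    using S by (simp add: in_S_def)
  have "((\<lambda>x. (G x - sine_series (sine_coeff G) x) * sin (freq n * x)) has_integral 0) {0..1}" for n
  proof -
    have "((\<lambda>x. G x * sin (freq n * x)) has_integral sine_coeff G n / 2) {0..1}"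
      unfolding sine_coeff_def
      by (simp add: integrable_integral integrable_continuous_interval continuous_intros G_cont)
    from has_integral_diff[OF this sine_series_fourier_coeff[OF decay, of n]]
    show ?thesis
      by (simp add: algebra_simps)
  qed
  then have "G x - sine_series (sine_coeff G) x = 0"
    by (intro sine_system_complete[OF _ _ x] continuous_intros G_cont continuous_on_sine_series[OF decay])
  then show ?thesis
    by simp
qed

lemma vector_derivative_within_01_transform:
  assumes "(f has_field_derivative f') (at x)" and "x \<in> {0..1}"
    and "\<And>y. y \<in> {0..1} \<Longrightarrow> g y = f y"
  shows "vector_derivative g (at x within {0..1}) = f'"
proof -
  have "(g has_vector_derivative f') (at x within {0..1})"
    using assms(2,3) has_vector_derivative_at_within[OF assms(1)[unfolded has_real_derivative_iff_has_vector_derivative]]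
    by (rule has_vector_derivative_transform)
  then show ?thesis
    by (rule vector_derivative_within_closed_interval[rotated 2]) (use assms(2) in auto)
qed

lemma in_S_d2_01_eq:
  assumes "\<alpha> > 0" and "in_S \<alpha> G" and x: "x \<in> {0..1}"
  shows "d2_01 G x = sine_series'' (sine_coeff G) x"
proof -
  have decay: "summable (\<lambda>m. \<bar>sine_coeff G m\<bar> * freq m ^ 4)"
    using in_S_sine_coeff_decay[OF assms(1,2)] .
  have "d01 G y = sine_series' (sine_coeff G) y" if "y \<in> {0..1}" for y
    unfolding d01_def
    by (rule vector_derivative_within_01_transform[OF has_field_derivative_sine_series[OF decay] that])
      (use in_S_eq_sine_series[OF assms(1,2)] in simp)
  then show ?thesis
    unfolding d2_01_def d01_def[of "d01 G"]
    by (rule vector_derivative_within_01_transform[OF has_field_derivative_sine_series'[OF decay] x])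
qed

lemma in_S_regularity:
  assumes "\<alpha> > 0" and "in_S \<alpha> G"
  obtains C where "G 0 = 0" "G 1 = 0" "d2_01 G 0 = 0" "d2_01 G 1 = 0"
    "\<And>t. t \<in> {0..1} \<Longrightarrow> \<bar>G t\<bar> \<le> C * t \<and> \<bar>G (1 - t)\<bar> \<le> C * t"
    "\<And>x h. 0 \<le> h \<Longrightarrow> h \<le> x \<Longrightarrow> x + h \<le> 1 \<Longrightarrow>
       \<bar>G (x + h) + G (x - h) - 2 * G x - h\<^sup>2 * d2_01 G x\<bar> \<le> C * h ^ 4"
proof
  let ?b = "sine_coeff G"
  let ?C = "\<Sum>m. \<bar>?b m\<bar> * freq m ^ 4"
  have decay: "summable (\<lambda>m. \<bar>?b m\<bar> * freq m ^ 4)"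
    using in_S_sine_coeff_decay[OF assms] .
  have G_eq: "\<And>x. x \<in> {0..1} \<Longrightarrow> G x = sine_series ?b x"
    using in_S_eq_sine_series[OF assms] .
  have d2_eq: "\<And>x. x \<in> {0..1} \<Longrightarrow> d2_01 G x = sine_series'' ?b x"
    using in_S_d2_01_eq[OF assms] .
  show "G 0 = 0" "G 1 = 0" "d2_01 G 0 = 0" "d2_01 G 1 = 0"
    by (simp_all add: G_eq d2_eq)
  show "\<bar>G t\<bar> \<le> ?C * t \<and> \<bar>G (1 - t)\<bar> \<le> ?C * t" if "t \<in> {0..1}" for t
    using abs_sine_series_le[OF decay, of t] that by (simp add: G_eq mult.commute)
  show "\<bar>G (x + h) + G (x - h) - 2 * G x - h\<^sup>2 * d2_01 G x\<bar> \<le> ?C * h ^ 4"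
    if "0 \<le> h" "h \<le> x" "x + h \<le> 1" for x h
  proof -
    have "\<bar>G (x + h) + G (x - h) - 2 * G x - h\<^sup>2 * d2_01 G x\<bar> \<le> h ^ 4 / 12 * ?C"
      using sine_series_second_difference[OF decay, of x h] that by (simp add: G_eq d2_eq)
    also have "\<dots> \<le> ?C * h ^ 4"
      using decay freq_ge_1 by (simp add: suminf_nonneg)
    finally show ?thesis .
  qed
qed

section \<open>The generator on the lattice\<close>

lemma genA_eq_second_difference:
  fixes F H :: "real \<Rightarrow> real"
  assumes N: "2 \<le> N" and x: "1 \<le> x" "x \<le> N - 1"
    and interior: "\<And>k. 1 \<le> k \<Longrightarrow> k \<le> N - 1 \<Longrightarrow> F (real k / real N) = H (real k / real N)"
    and left: "real N powr (2 - \<beta>) * \<alpha>L * (F 0 - F (1 / real N))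
      = \<alpha> * (real N)\<^sup>2 * (H 0 - H (1 / real N))"
    and right: "real N powr (2 - \<beta>) * \<alpha>R * (F 1 - F (real (N - 1) / real N))
      = \<alpha> * (real N)\<^sup>2 * (H 1 - H (real (N - 1) / real N))"
  shows "genA \<alpha> \<alpha>L \<alpha>R \<beta> N F x = \<alpha> * (real N)\<^sup>2 *
    (H ((real x + 1) / real N) + H ((real x - 1) / real N) - 2 * H (real x / real N))"
proof -
  let ?nb = "{y. 1 \<le> y \<and> y \<le> N - 1 \<and> (y = x + 1 \<or> x = y + 1)}"
  let ?h = "\<lambda>y. H (real y / real N)"
  have sum_eq: "(\<Sum>y\<in>?nb. \<alpha> * (F (real y / real N) - F (real x / real N)))
      = (\<Sum>y\<in>?nb. \<alpha> * (?h y - ?h x))"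
    using x by (intro sum.cong) (auto simp: interior)
  have genA_eq: "genA \<alpha> \<alpha>L \<alpha>R \<beta> N F x = (real N)\<^sup>2 * (\<Sum>y\<in>?nb. \<alpha> * (?h y - ?h x))
      + (if x = 1 then \<alpha> * (real N)\<^sup>2 * (H 0 - H (1 / real N)) else 0)
      + (if x = N - 1 then \<alpha> * (real N)\<^sup>2 * (H 1 - H (real (N - 1) / real N)) else 0)"
    using x unfolding genA_def left right sum_eq by simp
  have lower: "real x - 1 = real (x - 1)" and upper: "real x + 1 = real (x + 1)"
    using x by auto
  consider "x = 1" "x = N - 1" | "x = 1" "x \<noteq> N - 1" | "x \<noteq> 1" "x = N - 1" | "x \<noteq> 1" "x \<noteq> N - 1"
    by blast
  then show ?thesis
  proof cases
    case 1
    then have nb: "?nb = {}" and "real N = 2" using N by auto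
    with 1 show ?thesis unfolding genA_eq nb by (simp add: algebra_simps)
  next
    case 2
    then have nb: "?nb = {2}" using N by auto
    with 2 show ?thesis unfolding genA_eq nb by (simp add: algebra_simps)
  next
    case 3
    then have nb: "?nb = {x - 1}" and "real (N - 1) + 1 = real N" using N by auto
    with 3 show ?thesis unfolding genA_eq nb lower by (simp add: algebra_simps)
  next
    case 4
    then have nb: "?nb = {x - 1, x + 1}" and "x - 1 \<noteq> x + 1" using x by auto
    with 4 show ?thesis unfolding genA_eq nb lower upper by (simp add: algebra_simps)
  qed
qed

section \<open>The approximating functions\<close>

lemma robin_correction_bounds:
  fixes n a b s0 s1 C E :: real
  assumes n: "3 \<le> n" and "-1 < a" "-1 < b" and a: "\<bar>a\<bar> \<le> n * E" and b: "\<bar>b\<bar> \<le> n * E"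
    and s0: "\<bar>s0\<bar> \<le> C / n" and s1: "\<bar>s1\<bar> \<le> C / n"
  defines "d \<equiv> (b * s1 - a * s0) / (n + a + b)"
  shows "\<bar>a * (s0 + d)\<bar> \<le> C * E * (1 + 6 * E)" and "\<bar>b * (s1 - d)\<bar> \<le> C * E * (1 + 6 * E)"
proof -
  have "0 \<le> C / n" and "0 \<le> n * E"
    using s0 a by (meson abs_ge_zero order.trans)+
  then have C: "0 \<le> C" and E: "0 \<le> E"
    using n by (simp_all add: zero_le_divide_iff zero_le_mult_iff)
  have "\<bar>b * s1 - a * s0\<bar> \<le> \<bar>b\<bar> * \<bar>s1\<bar> + \<bar>a\<bar> * \<bar>s0\<bar>"
    by (simp add: abs_mult[symmetric] abs_triangle_ineq4)
  also have "\<dots> \<le> (n * E) * (C / n) + (n * E) * (C / n)"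
    using a b s0 s1 n E by (intro add_mono mult_mono) auto
  finally have num: "\<bar>b * s1 - a * s0\<bar> \<le> 2 * C * E"
    using n by simp
  have den: "n / 3 \<le> n + a + b"
    using n \<open>-1 < a\<close> \<open>-1 < b\<close> by linarith
  have "\<bar>d\<bar> = \<bar>b * s1 - a * s0\<bar> / (n + a + b)"
    using den n unfolding d_def by (simp add: abs_divide)
  also have "\<dots> \<le> 2 * C * E / (n / 3)"
    using num den n C E by (intro frac_le) auto
  finally have d: "\<bar>d\<bar> \<le> 6 * C * E / n"
    by simp
  have "\<bar>a * (s0 + d)\<bar> \<le> (n * E) * (C / n + 6 * C * E / n)"
    unfolding abs_mult using a s0 d E by (intro mult_mono order.trans[OF abs_triangle_ineq add_mono]) auto
  also have "\<dots> = C * E * (1 + 6 * E)"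
    using n by (simp add: field_simps)
  finally show "\<bar>a * (s0 + d)\<bar> \<le> C * E * (1 + 6 * E)" .
  have "\<bar>b * (s1 - d)\<bar> \<le> (n * E) * (C / n + 6 * C * E / n)"
    unfolding abs_mult using b s1 d E by (intro mult_mono order.trans[OF abs_triangle_ineq4 add_mono]) auto
  also have "\<dots> = C * E * (1 + 6 * E)"
    using n by (simp add: field_simps)
  finally show "\<bar>b * (s1 - d)\<bar> \<le> C * E * (1 + 6 * E)" .
qed

lemma Max_abs_tendsto_0:
  fixes f :: "nat \<Rightarrow> nat \<Rightarrow> real"
  assumes "eventually (\<lambda>N. \<forall>x\<in>{0..N}. \<bar>f N x\<bar> \<le> B N) sequentially" and "B \<longlonglongrightarrow> 0"
  shows "(\<lambda>N. Max ((\<lambda>x. \<bar>f N x\<bar>) ` {0..N})) \<longlonglongrightarrow> 0"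
proof (rule tendsto_sandwich[OF _ _ tendsto_const assms(2)])
  show "eventually (\<lambda>N. 0 \<le> Max ((\<lambda>x. \<bar>f N x\<bar>) ` {0..N})) sequentially"
    by (intro always_eventually allI order.trans[OF _ Max_ge[of _ "\<bar>f _ 0\<bar>"]]) auto
  show "eventually (\<lambda>N. Max ((\<lambda>x. \<bar>f N x\<bar>) ` {0..N}) \<le> B N) sequentially"
    using assms(1) by eventually_elim simp
qed

text \<open>The hypotheses are the properties of elements of the test space given by
  \<open>in_S_regularity\<close>, with \<open>G''\<close> in the role of the second derivative. It must vanish at
  \<open>0\<close> and \<open>1\<close> because the generator vanishes at the sites \<open>0\<close> and \<open>N\<close>.\<close>

context
  fixes \<alpha> \<alpha>L \<alpha>R \<beta> C :: real and G G'' :: "real \<Rightarrow> real"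
  assumes \<alpha>: "\<alpha> > 0" and \<alpha>L: "\<alpha>L > 0" and \<alpha>R: "\<alpha>R > 0" and \<beta>: "\<beta> < 1"
    and G_0: "G 0 = 0" and G_1: "G 1 = 0" and G''_0: "G'' 0 = 0" and G''_1: "G'' 1 = 0"
    and G_near_ends: "\<And>t. t \<in> {0..1} \<Longrightarrow> \<bar>G t\<bar> \<le> C * t \<and> \<bar>G (1 - t)\<bar> \<le> C * t"
    and G_second_difference: "\<And>x h. 0 \<le> h \<Longrightarrow> h \<le> x \<Longrightarrow> x + h \<le> 1 \<Longrightarrow>
      \<bar>G (x + h) + G (x - h) - 2 * G x - h\<^sup>2 * G'' x\<bar> \<le> C * h ^ 4"
begin

text \<open>\<open>corrected N\<close> is \<open>G\<close> plus the affine function with values \<open>correction_left N\<close> at \<open>0\<close>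
  and \<open>correction_right N\<close> at \<open>1\<close>, whose slope is \<open>N * correction_step N\<close>. These values solve
  the linear system stating that, at the sites \<open>1\<close> and \<open>N - 1\<close>, the boundary terms of the
  generator applied to \<open>discrete_approx N\<close> equal the bulk terms that \<open>corrected N\<close> would
  receive from the sites \<open>0\<close> and \<open>N\<close>; \<open>robin_ratio a N + 1\<close> is the ratio
  \<open>\<alpha> N\<^sup>2 / (a N\<^bsup>2 - \<beta>\<^esup>)\<close> of the bulk rate to the boundary rate.\<close>

definition robin_ratio :: "real \<Rightarrow> nat \<Rightarrow> real" where
  "robin_ratio a N = \<alpha> / a * real N powr \<beta> - 1"

definition correction_step :: "nat \<Rightarrow> real" where
  "correction_step N = (robin_ratio \<alpha>R N * G (1 - 1 / real N) - robin_ratio \<alpha>L N * G (1 / real N))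
     / (real N + robin_ratio \<alpha>L N + robin_ratio \<alpha>R N)"

definition correction_left :: "nat \<Rightarrow> real" where
  "correction_left N = robin_ratio \<alpha>L N * (G (1 / real N) + correction_step N)"

definition correction_right :: "nat \<Rightarrow> real" where
  "correction_right N = robin_ratio \<alpha>R N * (G (1 - 1 / real N) - correction_step N)"

definition corrected :: "nat \<Rightarrow> real \<Rightarrow> real" where
  "corrected N y = G y + correction_left N * (1 - y) + correction_right N * y"

definition discrete_approx :: "nat \<Rightarrow> real \<Rightarrow> real" where
  "discrete_approx N y = (if y = 0 \<or> y = 1 then 0 else corrected N y)"

definition robin_rate :: "nat \<Rightarrow> real" where
  "robin_rate N = (\<alpha> / \<alpha>L + \<alpha> / \<alpha>R) * real N powr (\<beta> - 1) + 1 / real N"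

lemma robin_ratio_gt: "a > 0 \<Longrightarrow> 1 \<le> N \<Longrightarrow> robin_ratio a N > -1"
  unfolding robin_ratio_def using \<alpha> by simp

lemma robin_ratio_scale:
  assumes "a > 0" "1 \<le> N"
  shows "real N powr (2 - \<beta>) * a * (robin_ratio a N + 1) = \<alpha> * (real N)\<^sup>2"
proof -
  have "real N powr (2 - \<beta>) * a * (robin_ratio a N + 1) = \<alpha> * (real N powr (2 - \<beta>) * real N powr \<beta>)"
    using assms(1) by (simp add: robin_ratio_def)
  also have "real N powr (2 - \<beta>) * real N powr \<beta> = (real N)\<^sup>2"
    using assms(2) by (simp add: powr_add[symmetric] powr_realpow)
  finally show ?thesis .
qed

lemma correction_right_minus_left:
  assumes "3 \<le> N"
  shows "correction_right N - correction_left N = real N * correction_step N"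
proof -
  have "real N + robin_ratio \<alpha>L N + robin_ratio \<alpha>R N > 0"
    using robin_ratio_gt[OF \<alpha>L, of N] robin_ratio_gt[OF \<alpha>R, of N] assms by simp
  then have "correction_step N * (real N + robin_ratio \<alpha>L N + robin_ratio \<alpha>R N)
      = robin_ratio \<alpha>R N * G (1 - 1 / real N) - robin_ratio \<alpha>L N * G (1 / real N)"
    unfolding correction_step_def by simp
  then show ?thesis
    unfolding correction_left_def correction_right_def by (simp add: algebra_simps)
qed

lemma corrected_near_ends:
  assumes "3 \<le> N"
  shows "corrected N (1 / real N) = (robin_ratio \<alpha>L N + 1) * (G (1 / real N) + correction_step N)"
    and "corrected N (1 - 1 / real N) = (robin_ratio \<alpha>R N + 1) * (G (1 - 1 / real N) - correction_step N)"
  using correction_right_minus_left[OF assms] assms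
  unfolding corrected_def correction_left_def correction_right_def
  by (simp_all add: field_simps)

lemma discrete_approx_boundary_terms:
  assumes N: "3 \<le> N"
  shows "real N powr (2 - \<beta>) * \<alpha>L * (discrete_approx N 0 - discrete_approx N (1 / real N))
      = \<alpha> * (real N)\<^sup>2 * (corrected N 0 - corrected N (1 / real N))"
    and "real N powr (2 - \<beta>) * \<alpha>R * (discrete_approx N 1 - discrete_approx N (1 - 1 / real N))
      = \<alpha> * (real N)\<^sup>2 * (corrected N 1 - corrected N (1 - 1 / real N))"
proof -
  have "1 / real N \<noteq> 0" "1 / real N \<noteq> 1" "1 - 1 / real N \<noteq> 0" "1 - 1 / real N \<noteq> 1"
    using N by (auto simp: field_simps)
  then have inner: "discrete_approx N (1 / real N) = corrected N (1 / real N)"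
      "discrete_approx N (1 - 1 / real N) = corrected N (1 - 1 / real N)"
    by (simp_all add: discrete_approx_def)
  have ends: "corrected N 0 = correction_left N" "corrected N 1 = correction_right N"
    by (simp_all add: corrected_def G_0 G_1)
  have scale: "real N powr (2 - \<beta>) * \<alpha>L * (robin_ratio \<alpha>L N + 1) = \<alpha> * (real N)\<^sup>2"
    "real N powr (2 - \<beta>) * \<alpha>R * (robin_ratio \<alpha>R N + 1) = \<alpha> * (real N)\<^sup>2"
    using N by (simp_all add: robin_ratio_scale \<alpha>L \<alpha>R)
  have "real N powr (2 - \<beta>) * \<alpha>L * (discrete_approx N 0 - discrete_approx N (1 / real N))
      = - (real N powr (2 - \<beta>) * \<alpha>L * (robin_ratio \<alpha>L N + 1)) * (G (1 / real N) + correction_step N)"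
    using N by (simp add: discrete_approx_def inner corrected_near_ends[OF N])
  also have "\<dots> = \<alpha> * (real N)\<^sup>2 * (corrected N 0 - corrected N (1 / real N))"
    unfolding scale ends corrected_near_ends[OF N] correction_left_def by (simp add: algebra_simps)
  finally show "real N powr (2 - \<beta>) * \<alpha>L * (discrete_approx N 0 - discrete_approx N (1 / real N))
      = \<alpha> * (real N)\<^sup>2 * (corrected N 0 - corrected N (1 / real N))" .
  have "real N powr (2 - \<beta>) * \<alpha>R * (discrete_approx N 1 - discrete_approx N (1 - 1 / real N))
      = - (real N powr (2 - \<beta>) * \<alpha>R * (robin_ratio \<alpha>R N + 1)) * (G (1 - 1 / real N) - correction_step N)"
    using N by (simp add: discrete_approx_def inner corrected_near_ends[OF N])
  also have "\<dots> = \<alpha> * (real N)\<^sup>2 * (corrected N 1 - corrected N (1 - 1 / real N))"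
    unfolding scale ends corrected_near_ends[OF N] correction_right_def by (simp add: algebra_simps)
  finally show "real N powr (2 - \<beta>) * \<alpha>R * (discrete_approx N 1 - discrete_approx N (1 - 1 / real N))
      = \<alpha> * (real N)\<^sup>2 * (corrected N 1 - corrected N (1 - 1 / real N))" .
qed

lemma genA_discrete_approx:
  assumes N: "3 \<le> N" and x: "1 \<le> x" "x \<le> N - 1"
  shows "genA \<alpha> \<alpha>L \<alpha>R \<beta> N (discrete_approx N) x = \<alpha> * (real N)\<^sup>2 *
    (G (real x / real N + 1 / real N) + G (real x / real N - 1 / real N) - 2 * G (real x / real N))"
proof -
  have "real (N - 1) / real N = 1 - 1 / real N"
    using N by (auto simp: field_simps)
  then have "genA \<alpha> \<alpha>L \<alpha>R \<beta> N (discrete_approx N) x = \<alpha> * (real N)\<^sup>2 * (corrected N ((real x + 1) / real N)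
      + corrected N ((real x - 1) / real N) - 2 * corrected N (real x / real N))"
    using N x discrete_approx_boundary_terms[OF N]
    by (intro genA_eq_second_difference) (auto simp: discrete_approx_def)
  then show ?thesis
    by (simp add: corrected_def add_divide_distrib diff_divide_distrib algebra_simps)
qed

lemma C_nonneg: "0 \<le> C"
  using G_near_ends[of "1/2"] abs_ge_zero[of "G (1/2)"] by simp

lemma genA_discrete_approx_error:
  assumes N: "3 \<le> N" and x: "x \<le> N"
  shows "\<bar>genA \<alpha> \<alpha>L \<alpha>R \<beta> N (discrete_approx N) x - \<alpha> * G'' (real x / real N)\<bar> \<le> \<alpha> * C / (real N)\<^sup>2"
proof -
  have bound_nonneg: "0 \<le> \<alpha> * C / (real N)\<^sup>2"
    using \<alpha> C_nonneg by simp
  consider "x = 0" | "x = N" | "1 \<le> x" "x \<le> N - 1"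
    using x by linarith
  then show ?thesis
  proof cases
    case 1
    then show ?thesis using bound_nonneg by (simp add: genA_def G''_0)
  next
    case 2
    then show ?thesis using bound_nonneg N by (simp add: genA_def G''_1)
  next
    case 3
    define y h where "y = real x / real N" and "h = 1 / real N"
    have h: "0 \<le> h" "h \<le> y" "y + h \<le> 1" and Nh: "(real N)\<^sup>2 * h\<^sup>2 = 1"
      using 3 N by (auto simp: y_def h_def field_simps)
    have "genA \<alpha> \<alpha>L \<alpha>R \<beta> N (discrete_approx N) x - \<alpha> * G'' y
        = \<alpha> * (real N)\<^sup>2 * (G (y + h) + G (y - h) - 2 * G y - h\<^sup>2 * G'' y)"
      using genA_discrete_approx[OF N 3] Nh by (simp add: y_def h_def algebra_simps)
    also have "\<bar>\<dots>\<bar> = \<alpha> * (real N)\<^sup>2 * \<bar>G (y + h) + G (y - h) - 2 * G y - h\<^sup>2 * G'' y\<bar>"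
      using \<alpha> by (simp add: abs_mult)
    also have "\<dots> \<le> \<alpha> * (real N)\<^sup>2 * (C * h ^ 4)"
      using \<alpha> G_second_difference[OF h] by (intro mult_left_mono) auto
    also have "\<dots> = \<alpha> * C / (real N)\<^sup>2"
      using N by (simp add: h_def field_simps power2_eq_square eval_nat_numeral)
    finally show ?thesis
      by (simp add: y_def)
  qed
qed

lemma discrete_approx_error:
  assumes N: "3 \<le> N" and x: "x \<le> N"
  shows "\<bar>discrete_approx N (real x / real N) - G (real x / real N)\<bar> \<le> \<bar>correction_left N\<bar> + \<bar>correction_right N\<bar>"
proof -
  consider "x = 0" | "x = N" | "1 \<le> x" "x \<le> N - 1"
    using x by linarith
  then show ?thesis
  proof cases
    case 3
    define y where "y = real x / real N"
    have y: "0 < y" "y < 1"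
      using 3 N by (auto simp: y_def field_simps)
    then have "\<bar>discrete_approx N y - G y\<bar> = \<bar>correction_left N * (1 - y) + correction_right N * y\<bar>"
      by (simp add: discrete_approx_def corrected_def)
    also have "\<dots> \<le> \<bar>correction_left N\<bar> * 1 + \<bar>correction_right N\<bar> * 1"
      using y by (intro order.trans[OF abs_triangle_ineq add_mono])
        (auto simp: abs_mult intro!: mult_left_le)
    finally show ?thesis
      by (simp add: y_def)
  qed (use N in \<open>simp_all add: discrete_approx_def G_0 G_1\<close>)
qed

lemma abs_robin_ratio_le:
  assumes "a = \<alpha>L \<or> a = \<alpha>R" and "1 \<le> N"
  shows "\<bar>robin_ratio a N\<bar> \<le> real N * robin_rate N"
proof -
  have "\<bar>robin_ratio a N\<bar> \<le> \<alpha> / a * real N powr \<beta> + 1"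
    unfolding robin_ratio_def using assms \<alpha> \<alpha>L \<alpha>R by (auto simp: abs_if)
  also have "\<dots> \<le> (\<alpha> / \<alpha>L + \<alpha> / \<alpha>R) * real N powr \<beta> + 1"
    using assms \<alpha> \<alpha>L \<alpha>R by (auto simp: distrib_right)
  also have "\<dots> = real N * robin_rate N"
    unfolding robin_rate_def using assms(2) by (simp add: powr_diff field_simps)
  finally show ?thesis .
qed

lemma abs_correction_le:
  assumes N: "3 \<le> N"
  shows "\<bar>correction_left N\<bar> \<le> C * robin_rate N * (1 + 6 * robin_rate N)"
    and "\<bar>correction_right N\<bar> \<le> C * robin_rate N * (1 + 6 * robin_rate N)"
proof -
  have "1 / real N \<in> {0..1}"
    using N by simp
  from G_near_ends[OF this] have "\<bar>G (1 / real N)\<bar> \<le> C / real N" "\<bar>G (1 - 1 / real N)\<bar> \<le> C / real N"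
    by simp_all
  from robin_correction_bounds[OF _ robin_ratio_gt[OF \<alpha>L] robin_ratio_gt[OF \<alpha>R]
      abs_robin_ratio_le abs_robin_ratio_le this]
  show "\<bar>correction_left N\<bar> \<le> C * robin_rate N * (1 + 6 * robin_rate N)"
    and "\<bar>correction_right N\<bar> \<le> C * robin_rate N * (1 + 6 * robin_rate N)"
    using N unfolding correction_left_def correction_right_def correction_step_def by auto
qed

lemma robin_rate_tendsto_0: "robin_rate \<longlonglongrightarrow> 0"
proof -
  have "(\<lambda>N. real N powr (\<beta> - 1)) \<longlonglongrightarrow> 0"
    by (rule tendsto_neg_powr[OF _ filterlim_real_sequentially]) (use \<beta> in simp)
  then have "(\<lambda>N. (\<alpha> / \<alpha>L + \<alpha> / \<alpha>R) * real N powr (\<beta> - 1) + 1 / real N)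
      \<longlonglongrightarrow> (\<alpha> / \<alpha>L + \<alpha> / \<alpha>R) * 0 + 0"
    by (intro tendsto_intros lim_const_over_n)
  then show ?thesis
    unfolding robin_rate_def[abs_def] by simp
qed

lemma discrete_approx_converges:
  "\<exists>GN :: nat \<Rightarrow> real \<Rightarrow> real.
     (\<forall>N. GN N 0 = 0 \<and> GN N 1 = 0) \<and>
     (\<lambda>N. Max ((\<lambda>x. \<bar>GN N (real x / real N) - G (real x / real N)\<bar>) ` {0..N})) \<longlonglongrightarrow> 0 \<and>
     (\<lambda>N. Max ((\<lambda>x. \<bar>genA \<alpha> \<alpha>L \<alpha>R \<beta> N (GN N) x - \<alpha> * G'' (real x / real N)\<bar>) ` {0..N}))
        \<longlonglongrightarrow> 0"
proof (intro exI[of _ discrete_approx] conjI allI)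
  show "discrete_approx N 0 = 0" "discrete_approx N 1 = 0" for N
    by (simp_all add: discrete_approx_def)
  have "eventually (\<lambda>N. \<forall>x\<in>{0..N}. \<bar>discrete_approx N (real x / real N) - G (real x / real N)\<bar>
      \<le> 2 * (C * robin_rate N * (1 + 6 * robin_rate N))) sequentially"
    using eventually_ge_at_top[of 3]
  proof eventually_elim
    case (elim N)
    show ?case
      using discrete_approx_error[OF elim] abs_correction_le[OF elim] by fastforce
  qed
  moreover have "(\<lambda>N. 2 * (C * robin_rate N * (1 + 6 * robin_rate N))) \<longlonglongrightarrow> 0"
    using robin_rate_tendsto_0 tendsto_mult[of _ 0 _ _ 1] by (auto intro!: tendsto_eq_intros)
  ultimately show "(\<lambda>N. Max ((\<lambda>x. \<bar>discrete_approx N (real x / real N) - G (real x / real N)\<bar>) ` {0..N}))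
      \<longlonglongrightarrow> 0"
    by (rule Max_abs_tendsto_0)
  have "eventually (\<lambda>N. \<forall>x\<in>{0..N}.
      \<bar>genA \<alpha> \<alpha>L \<alpha>R \<beta> N (discrete_approx N) x - \<alpha> * G'' (real x / real N)\<bar> \<le> \<alpha> * C * (1 / real N)\<^sup>2)
      sequentially"
    using eventually_ge_at_top[of 3]
    by eventually_elim (auto dest: genA_discrete_approx_error simp: power_divide)
  moreover have "(\<lambda>N. \<alpha> * C * (1 / real N)\<^sup>2) \<longlonglongrightarrow> 0"
    using lim_const_over_n[of 1] by (auto intro!: tendsto_eq_intros)
  ultimately show "(\<lambda>N. Max ((\<lambda>x. \<bar>genA \<alpha> \<alpha>L \<alpha>R \<beta> N (discrete_approx N) x - \<alpha> * G'' (real x / real N)\<bar>)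
      ` {0..N})) \<longlonglongrightarrow> 0"
    by (rule Max_abs_tendsto_0)
qed

end

theorem lemma4p2:
  fixes \<alpha> \<alpha>L \<alpha>R \<beta> :: real and G :: "real \<Rightarrow> real"
  assumes "\<alpha> > 0" "\<alpha>L > 0" "\<alpha>R > 0" "0 \<le> \<beta>" "\<beta> < 1"
    and "in_S \<alpha> G"
  shows "\<exists>GN :: nat \<Rightarrow> real \<Rightarrow> real.
           (\<forall>N. GN N 0 = 0 \<and> GN N 1 = 0) \<and>
           (\<lambda>N. Max ((\<lambda>x. \<bar>GN N (real x / real N) - G (real x / real N)\<bar>) ` {0..N}))
              \<longlonglongrightarrow> 0 \<and>
           (\<lambda>N. Max ((\<lambda>x. \<bar>genA \<alpha> \<alpha>L \<alpha>R \<beta> N (GN N) x - \<alpha> * d2_01 G (real x / real N)\<bar>)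
                       ` {0..N})) \<longlonglongrightarrow> 0"
proof -
  obtain C where regular: "G 0 = 0" "G 1 = 0" "d2_01 G 0 = 0" "d2_01 G 1 = 0"
    "\<And>t. t \<in> {0..1} \<Longrightarrow> \<bar>G t\<bar> \<le> C * t \<and> \<bar>G (1 - t)\<bar> \<le> C * t"
    "\<And>x h. 0 \<le> h \<Longrightarrow> h \<le> x \<Longrightarrow> x + h \<le> 1 \<Longrightarrow>
       \<bar>G (x + h) + G (x - h) - 2 * G x - h\<^sup>2 * d2_01 G x\<bar> \<le> C * h ^ 4"
    using in_S_regularity[OF \<open>\<alpha> > 0\<close> \<open>in_S \<alpha> G\<close>] by blast
  show ?thesis
    by (rule discrete_approx_converges[OF assms(1-3,5) regular])
qed

end
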